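(* Let $s,D\in\mathbb N$, let $\mathcal G=\{G_1,\dots,G_t\}$ be a graph family, and let $\phi:\mathcal H\hookrightarrow\mathcal G$ be an $(s,D)$-good embedding of a rooted $[t]$-edge-colored graph $\mathcal H$. Suppose $h,h'$ are non-adjacent vertices of $\mathcal H$ with $\phi(h)\phi(h')\in E(G_r)$ for some $r\in[t]$. Let $\mathcal H'$ be the rooted graph obtained from $\mathcal H$ by adding an edge $hh'$ of color $r$, with root set equal to the roots of $\mathcal H$ together with $h$, $h'$ and all ancestors of $h$ and of $h'$. Then $\phi$ is an $(s,D)$-good embedding of $\mathcal H'$ into $\mathcal G$.
   Context: A graph family $\mathcal G=\{G_1,\dots,G_t\}$ is a collection of $t$ simple graphs on a common finite vertex set $V$. For $X\subseteq V\times[t]$, $\Gamma_{\mathcal G}(X)=\bigcup_{(v,i)\in X}\{u\in V:uv\in E(G_i)\}$. A $[t]$-edge-colored graph $\mathcal H$ is a simple graph with each edge colored in $[t]$; $H_i$ is its spanning subgraph of color-$i$ edges and $\deg_{H_i}(h)$ the number of color-$i$ edges at $h$. An embedding $\phi:\mathcal H\hookrightarrow\mathcal G$ is an injective map $V(\mathcal H)\to V$ with $\phi(x)\phi(y)\in E(G_i)$ for every edge $xy$ of color $i$. A rooted $[t]$-edge-colored graph is one with a distinguished set of roots such that, after deleting all edges with both ends roots, every connected component is a tree containing exactly one root; for a non-root $h$ the unique path from $h$ to the root set (meeting it only at its last vertex) determines the parent of $h$ (its neighbour on the path), its ancestors (the other vertices of the path), and $c(h)$, the color of the edge from $h$ to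 its parent. For fixed $D$: $P_\phi(\mathcal H)=\{(\phi(h),c(h)):h\text{ non-root}\}$ and, for $X\subseteq V\times[t]$, $R(X,\phi)=|\Gamma_{\mathcal G}(X)\setminus\phi(V(\mathcal H))|-\sum_{(v,i)\in X}[D-\deg_{H_i}(\phi^{-1}(v))]-|P_\phi(\mathcal H)\cap X|$, with $\deg_{H_i}(\phi^{-1}(v))=0$ if $v\notin\phi(V(\mathcal H))$. The embedding $\phi$ is $(s,D)$-good if $R(X,\phi)\ge0$ for every $X\subseteq V\times[t]$ with $|X|\le s$. *)

theory Defs
  imports Main
begin

definition graph_family :: "'v set \<Rightarrow> (nat \<Rightarrow> 'v \<Rightarrow> 'v \<Rightarrow> bool) \<Rightarrow> nat \<Rightarrow> bool" where
  "graph_family V G t \<longleftrightarrow> finite V \<and>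
     (\<forall>i\<in>{1..t}. \<forall>u v. G i u v \<longrightarrow> u \<in> V \<and> v \<in> V \<and> u \<noteq> v \<and> G i v u)"

definition Gamma :: "'v set \<Rightarrow> (nat \<Rightarrow> 'v \<Rightarrow> 'v \<Rightarrow> bool) \<Rightarrow> ('v \<times> nat) set \<Rightarrow> 'v set" where
  "Gamma V G X = (\<Union>(v,i)\<in>X. {u \<in> V. G i u v})"

definition colored_graph :: "nat \<Rightarrow> 'h set \<Rightarrow> 'h set set \<Rightarrow> ('h set \<Rightarrow> nat) \<Rightarrow> bool" where
  "colored_graph t VH E col \<longleftrightarrow> finite VH \<and>
     (\<forall>e\<in>E. \<exists>x y. x \<noteq> y \<and> x \<in> VH \<and> y \<in> VH \<and> e = {x, y}) \<and>
     (\<forall>e\<in>E. col e \<in> {1..t})"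

definition is_walk :: "'h set set \<Rightarrow> 'h list \<Rightarrow> bool" where
  "is_walk F p \<longleftrightarrow> p \<noteq> [] \<and> (\<forall>i. Suc i < length p \<longrightarrow> {p ! i, p ! Suc i} \<in> F)"

definition is_path :: "'h set set \<Rightarrow> 'h list \<Rightarrow> bool" where
  "is_path F p \<longleftrightarrow> is_walk F p \<and> distinct p"

definition is_cycle :: "'h set set \<Rightarrow> 'h list \<Rightarrow> bool" where
  "is_cycle F p \<longleftrightarrow> is_path F p \<and> length p \<ge> 3 \<and> {last p, hd p} \<in> F"

definition reach :: "'h set set \<Rightarrow> 'h \<Rightarrow> 'h \<Rightarrow> bool" where
  "reach F x y \<longleftrightarrow> (\<exists>p. is_path F p \<and> hd p = x \<and> last p = y)"

definition fedges :: "'h set set \<Rightarrow> 'h set \<Rightarrow> 'h set set" where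
  "fedges E Rt = {e \<in> E. \<not> e \<subseteq> Rt}"

definition rooted :: "nat \<Rightarrow> 'h set \<Rightarrow> 'h set set \<Rightarrow> ('h set \<Rightarrow> nat) \<Rightarrow> 'h set \<Rightarrow> bool" where
  "rooted t VH E col Rt \<longleftrightarrow> colored_graph t VH E col \<and> Rt \<subseteq> VH \<and>
     \<not> (\<exists>p. set p \<subseteq> VH \<and> is_cycle (fedges E Rt) p) \<and>
     (\<forall>v\<in>VH. \<exists>!r. r \<in> Rt \<and> reach (fedges E Rt) v r)"

definition root_path :: "'h set set \<Rightarrow> 'h set \<Rightarrow> 'h \<Rightarrow> 'h list \<Rightarrow> bool" where
  "root_path E Rt h p \<longleftrightarrow> is_path E p \<and> hd p = h \<and> last p \<in> Rt \<and>
     (\<forall>x\<in>set (butlast p). x \<notin> Rt)"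

definition the_root_path :: "'h set set \<Rightarrow> 'h set \<Rightarrow> 'h \<Rightarrow> 'h list" where
  "the_root_path E Rt h = (THE p. root_path E Rt h p)"

definition parent :: "'h set set \<Rightarrow> 'h set \<Rightarrow> 'h \<Rightarrow> 'h" where
  "parent E Rt h = the_root_path E Rt h ! 1"

definition ancestors :: "'h set set \<Rightarrow> 'h set \<Rightarrow> 'h \<Rightarrow> 'h set" where
  "ancestors E Rt h = set (tl (the_root_path E Rt h))"

definition pcol :: "'h set set \<Rightarrow> ('h set \<Rightarrow> nat) \<Rightarrow> 'h set \<Rightarrow> 'h \<Rightarrow> nat" where
  "pcol E col Rt h = col {h, parent E Rt h}"

definition embedding :: "'v set \<Rightarrow> (nat \<Rightarrow> 'v \<Rightarrow> 'v \<Rightarrow> bool) \<Rightarrow> 'h set \<Rightarrow> 'h set set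
     \<Rightarrow> ('h set \<Rightarrow> nat) \<Rightarrow> ('h \<Rightarrow> 'v) \<Rightarrow> bool" where
  "embedding V G VH E col \<phi> \<longleftrightarrow> inj_on \<phi> VH \<and> \<phi> ` VH \<subseteq> V \<and>
     (\<forall>x y. {x, y} \<in> E \<longrightarrow> G (col {x, y}) (\<phi> x) (\<phi> y))"

definition cdeg :: "'h set set \<Rightarrow> ('h set \<Rightarrow> nat) \<Rightarrow> nat \<Rightarrow> 'h \<Rightarrow> nat" where
  "cdeg E col i x = card {e \<in> E. x \<in> e \<and> col e = i}"

definition pdeg :: "'h set \<Rightarrow> 'h set set \<Rightarrow> ('h set \<Rightarrow> nat) \<Rightarrow> ('h \<Rightarrow> 'v) \<Rightarrow> nat \<Rightarrow> 'v \<Rightarrow> nat" where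
  "pdeg VH E col \<phi> i v = (if v \<in> \<phi> ` VH then cdeg E col i (the_inv_into VH \<phi> v) else 0)"

definition Pset :: "'h set \<Rightarrow> 'h set set \<Rightarrow> ('h set \<Rightarrow> nat) \<Rightarrow> 'h set \<Rightarrow> ('h \<Rightarrow> 'v) \<Rightarrow> ('v \<times> nat) set" where
  "Pset VH E col Rt \<phi> = {(\<phi> x, pcol E col Rt x) | x. x \<in> VH - Rt}"

definition Rval :: "'v set \<Rightarrow> (nat \<Rightarrow> 'v \<Rightarrow> 'v \<Rightarrow> bool) \<Rightarrow> nat \<Rightarrow> 'h set \<Rightarrow> 'h set set
     \<Rightarrow> ('h set \<Rightarrow> nat) \<Rightarrow> 'h set \<Rightarrow> ('h \<Rightarrow> 'v) \<Rightarrow> ('v \<times> nat) set \<Rightarrow> int" where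
  "Rval V G D VH E col Rt \<phi> X =
     int (card (Gamma V G X - \<phi> ` VH))
     - (\<Sum>(v,i)\<in>X. int D - int (pdeg VH E col \<phi> i v))
     - int (card (Pset VH E col Rt \<phi> \<inter> X))"

definition good :: "nat \<Rightarrow> nat \<Rightarrow> 'v set \<Rightarrow> (nat \<Rightarrow> 'v \<Rightarrow> 'v \<Rightarrow> bool) \<Rightarrow> nat \<Rightarrow> 'h set
     \<Rightarrow> 'h set set \<Rightarrow> ('h set \<Rightarrow> nat) \<Rightarrow> 'h set \<Rightarrow> ('h \<Rightarrow> 'v) \<Rightarrow> bool" where
  "good s D V G t VH E col Rt \<phi> \<longleftrightarrow> rooted t VH E col Rt \<and> embedding V G VH E col \<phi> \<and>
     (\<forall>X. X \<subseteq> V \<times> {1..t} \<longrightarrow> card X \<le> s \<longrightarrow> Rval V G D VH E col Rt \<phi> X \<ge> 0)"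

end

theory Submission
  imports Defs "HOL-Library.Sublist"
begin

(* The new root set S consists of the old roots, h, h' and their ancestors, so it is closed
   under taking parents and contains both ends of the new edge.  Hence every non-root edge of
   the new graph is a non-root edge of the old forest, which keeps the new forest acyclic, and
   a path from a vertex x to S through non-root edges must follow the old path from x to the
   roots up to its first vertex in S.  So every vertex outside S keeps its parent and its
   colour c(x).  In R(X, phi) the degrees can only grow and P_phi can only shrink, so no value
   of R decreases. *)

abbreviation (input) adj :: "'h set set \<Rightarrow> 'h \<Rightarrow> 'h \<Rightarrow> bool" where
  "adj F \<equiv> \<lambda>a b. {a, b} \<in> F"

lemma is_walk_iff_successively: "is_walk F p \<longleftrightarrow> p \<noteq> [] \<and> successively (adj F) p"
  unfolding is_walk_def successively_conv_nth by blast

lemma is_path_iff_successively: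
  "is_path F p \<longleftrightarrow> p \<noteq> [] \<and> successively (adj F) p \<and> distinct p"
  unfolding is_path_def is_walk_iff_successively by blast

lemma successively_adj_rev: "successively (adj F) (rev xs) = successively (adj F) xs"
  by (simp add: insert_commute)

lemma is_path_mono: "is_path F p \<Longrightarrow> F \<subseteq> F' \<Longrightarrow> is_path F' p"
  unfolding is_path_iff_successively by (auto elim: successively_mono)

lemma is_cycle_mono: "is_cycle F p \<Longrightarrow> F \<subseteq> F' \<Longrightarrow> is_cycle F' p"
  unfolding is_cycle_def using is_path_mono by blast

lemma successively_take: "successively P xs \<Longrightarrow> successively P (take n xs)"
  using successively_append_iff[of P "take n xs" "drop n xs"] by simp

lemma successively_drop: "successively P xs \<Longrightarrow> successively P (drop n xs)"
  using successively_append_iff[of P "take n xs" "drop n xs"] by simp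

lemma is_path_take: "is_path F p \<Longrightarrow> n > 0 \<Longrightarrow> is_path F (take n p)"
  unfolding is_path_iff_successively by (auto simp: successively_take)

lemma is_path_drop: "is_path F p \<Longrightarrow> n < length p \<Longrightarrow> is_path F (drop n p)"
  unfolding is_path_iff_successively by (auto simp: successively_drop)

lemma is_walk_set_subset:
  assumes "is_walk F p" "\<forall>e\<in>F. e \<subseteq> VH" "hd p \<in> VH"
  shows "set p \<subseteq> VH"
proof
  fix y assume "y \<in> set p"
  then obtain i where i: "i < length p" "p ! i = y" by (auto simp: in_set_conv_nth)
  show "y \<in> VH"
  proof (cases i)
    case 0 then show ?thesis using i assms by (simp add: hd_conv_nth is_walk_def)
  next
    case (Suc j)
    then have "{p ! j, p ! i} \<in> F" using assms(1) i unfolding is_walk_def by auto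
    then show ?thesis using assms(2) i by auto
  qed
qed

(* Two paths leaving x through different edges close a cycle at the first vertex z of the
   first path that lies on the second one. *)
lemma diverging_paths_cycle:
  assumes p: "is_path F (x # p)" and q: "is_path F (x # q)"
    and "p \<noteq> []" "q \<noteq> []" "hd p \<noteq> hd q" "last p = last q"
  obtains c where "set c \<subseteq> set (x # p) \<union> set (x # q)" "is_cycle F c"
proof -
  have sp: "successively (adj F) (x # p)" and dp: "distinct (x # p)"
    and sq: "successively (adj F) (x # q)" and dq: "distinct (x # q)"
    using p q by (auto simp: is_path_iff_successively)
  have "last p \<in> set q" using assms(3-6) by simp
  then obtain u z w where pu: "p = u @ z # w" and zq: "z \<in> set q" and uq: "\<forall>y\<in>set u. y \<notin> set q"
    using split_list_first_propE[of p "\<lambda>y. y \<in> set q"] assms(3) by (metis last_in_set)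
  obtain u' w' where qu: "q = u' @ z # w'" using zq split_list by metis
  define c where "c = (x # u @ [z]) @ rev u'"
  have "distinct c" using dp dq pu qu uq unfolding c_def by auto
  moreover have "length c \<ge> 3"
  proof -
    have "u \<noteq> [] \<or> u' \<noteq> []" using assms(5) pu qu by auto
    then show ?thesis unfolding c_def by (cases u; cases u') auto
  qed
  moreover have "successively (adj F) c"
  proof -
    have a: "successively (adj F) (x # u @ [z])"
      using sp pu successively_take[of _ "x # p" "Suc (Suc (length u))"] by simp
    have "successively (adj F) (u' @ [z])"
      using sq qu successively_take[of _ "x # q" "Suc (Suc (length u'))"]
      by (simp add: successively_Cons successively_append_iff split: if_splits)
    then have b: "successively (adj F) u'" "u' \<noteq> [] \<Longrightarrow> adj F (last u') z"
      by (auto simp: successively_append_iff)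
    have "successively (adj F) (rev u')" using b(1) successively_adj_rev by blast
    moreover have "rev u' = [] \<or> adj F (last (x # u @ [z])) (hd (rev u'))"
      using b(2) by (cases "u' = []") (auto simp: hd_rev insert_commute)
    ultimately show ?thesis unfolding c_def using a successively_append_iff by blast
  qed
  moreover have "{last c, hd c} \<in> F"
  proof -
    have "last c = hd q" unfolding c_def using qu by (cases u') (auto simp: last_rev)
    moreover have "{x, hd q} \<in> F" using sq assms(4) by (cases q) auto
    ultimately show ?thesis unfolding c_def by (simp add: insert_commute)
  qed
  moreover have "set c \<subseteq> set (x # p) \<union> set (x # q)" using pu qu unfolding c_def by auto
  moreover have "c \<noteq> []" unfolding c_def by simp
  ultimately show thesis using that[of c] unfolding is_cycle_def is_path_iff_successively by blast
qed

lemma acyclic_path_unique: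
  assumes "\<not> (\<exists>c. set c \<subseteq> VH \<and> is_cycle F c)"
    and "is_path F p1" "is_path F p2" "set p1 \<subseteq> VH" "set p2 \<subseteq> VH"
    and "hd p1 = hd p2" "last p1 = last p2"
  shows "p1 = p2"
  using assms(2-)
proof (induction p1 arbitrary: p2)
  case Nil then show ?case by (simp add: is_path_iff_successively)
next
  case (Cons x p)
  obtain q where q: "p2 = x # q" using Cons.prems by (cases p2) (auto simp: is_path_iff_successively)
  consider "p = []" "q = []" | "(p = []) \<noteq> (q = [])" | "p \<noteq> []" "q \<noteq> []" "hd p = hd q"
    | "p \<noteq> []" "q \<noteq> []" "hd p \<noteq> hd q" by blast
  then show ?case
  proof cases
    case 2
    then have "x \<in> set p \<or> x \<in> set q" using Cons.prems q by (cases p) (auto simp: last_in_set)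
    then show ?thesis using Cons.prems(1,2) q by (simp add: is_path_iff_successively)
  next
    case 3
    have "p = q"
      using Cons.prems q 3 by (intro Cons.IH) (auto simp: is_path_iff_successively successively_Cons)
    then show ?thesis using q by simp
  next
    case 4
    then have "last p = last q" using Cons.prems(6) q by simp
    then obtain c where "set c \<subseteq> set (x # p) \<union> set (x # q)" "is_cycle F c"
      using diverging_paths_cycle Cons.prems(1,2) q 4 by metis
    then show ?thesis using assms(1) Cons.prems(3,4) q by blast
  qed (use q in simp)
qed

lemma path_prefix_to_first_hit:
  assumes "is_path F p" "last p \<in> S"
  obtains p' where "prefix p' p" "is_path (fedges F S) p'" "hd p' = hd p" "last p' \<in> S"
    "\<forall>y\<in>set (butlast p'). y \<notin> S"
proof -
  have pne: "p \<noteq> []" using assms by (simp add: is_path_iff_successively)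
  have ex: "\<exists>k. k < length p \<and> p ! k \<in> S"
    using assms pne by (metis diff_less last_conv_nth length_greater_0_conv zero_less_one)
  define k where "k = (LEAST k. k < length p \<and> p ! k \<in> S)"
  have k: "k < length p" "p ! k \<in> S" using LeastI_ex[OF ex] unfolding k_def by auto
  have before_k: "\<forall>i<k. p ! i \<notin> S" using not_less_Least k(1) unfolding k_def
    by (metis (mono_tags, lifting) order.strict_trans)
  have "is_path (fedges F S) (take (Suc k) p)"
    using assms(1) before_k k unfolding is_path_def is_walk_def fedges_def by auto
  moreover have "hd (take (Suc k) p) = hd p" using pne by (simp add: hd_take)
  moreover have "last (take (Suc k) p) = p ! k" using k(1) by (simp add: take_Suc_conv_app_nth)
  moreover have "\<forall>y\<in>set (butlast (take (Suc k) p)). y \<notin> S"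
    using before_k k by (auto simp: butlast_take in_set_conv_nth)
  ultimately show thesis using that take_is_prefix k(2) by metis
qed

lemma prefix_first_hit_unique:
  assumes "prefix p1 Q" "prefix p2 Q" "p1 \<noteq> []" "p2 \<noteq> []" "last p1 \<in> T" "last p2 \<in> T"
    "\<forall>y\<in>set (butlast p1). y \<notin> T" "\<forall>y\<in>set (butlast p2). y \<notin> T"
  shows "p1 = p2"
proof -
  have "a = b" if "prefix a b" "a \<noteq> []" "b \<noteq> []" "last a \<in> T" "\<forall>y\<in>set (butlast b). y \<notin> T"
    for a b
  proof (rule ccontr)
    assume "a \<noteq> b"
    moreover have "b = butlast b @ [last b]" using that(3) by simp
    ultimately have "prefix a (butlast b)" using that(1) prefix_snoc by metis
    then have "last a \<in> set (butlast b)" using that(2) set_mono_prefix by fastforce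
    then show False using that by blast
  qed
  then show ?thesis using assms prefix_same_cases by metis
qed

lemma colored_graph_edgeD:
  "colored_graph t VH E col \<Longrightarrow> {a, b} \<in> E \<Longrightarrow> a \<noteq> b \<and> a \<in> VH \<and> b \<in> VH"
  unfolding colored_graph_def by (fastforce simp: doubleton_eq_iff)

lemma colored_graph_edge_subset: "colored_graph t VH E col \<Longrightarrow> e \<in> E \<Longrightarrow> e \<subseteq> VH"
  unfolding colored_graph_def by fastforce

lemma colored_graph_finite_edges:
  assumes "colored_graph t VH E col" shows "finite E"
proof -
  have "E \<subseteq> Pow VH" using colored_graph_edge_subset[OF assms] by blast
  moreover have "finite VH" using assms unfolding colored_graph_def by blast
  ultimately show ?thesis by (meson finite_Pow_iff finite_subset)
qed

lemma colored_graph_insert_edge: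
  assumes "colored_graph t VH E col" "h \<in> VH" "h' \<in> VH" "h \<noteq> h'" "{h, h'} \<notin> E"
    "r \<in> {1..t}"
  shows "colored_graph t VH (insert {h, h'} E) (col({h, h'} := r))"
  using assms unfolding colored_graph_def by auto

lemma embedding_insert_edge:
  assumes "graph_family V G t" "embedding V G VH E col \<phi>" "{h, h'} \<notin> E" "r \<in> {1..t}"
    "G r (\<phi> h) (\<phi> h')"
  shows "embedding V G VH (insert {h, h'} E) (col({h, h'} := r)) \<phi>"
proof -
  have "G r (\<phi> h') (\<phi> h)" using assms(1,4,5) unfolding graph_family_def by blast
  then have "G r (\<phi> x) (\<phi> y)" if "{x, y} = {h, h'}" for x y
    using that assms(5) by (auto simp: doubleton_eq_iff)
  then show ?thesis using assms(2,3) unfolding embedding_def by auto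
qed

lemma root_path_hd: "root_path E Rt x p \<Longrightarrow> p \<noteq> [] \<and> hd p = x"
  unfolding root_path_def is_path_def is_walk_def by auto

lemma root_path_fedges:
  assumes "root_path E Rt x p" shows "is_path (fedges E Rt) p"
proof -
  have "\<And>i. Suc i < length p \<Longrightarrow> p ! i \<notin> Rt"
    using assms unfolding root_path_def
    by (metis Suc_lessE diff_Suc_1 in_set_conv_nth length_butlast nth_butlast)
  moreover have "is_path E p" using assms unfolding root_path_def by blast
  ultimately show ?thesis unfolding is_path_def is_walk_def fedges_def
    by (metis (no_types, lifting) insert_subset mem_Collect_eq)
qed

lemma root_path_set_subset:
  assumes "colored_graph t VH E col" "root_path E Rt x p" "x \<in> VH"
  shows "set p \<subseteq> VH"
  using is_walk_set_subset[of E p VH] colored_graph_edge_subset[OF assms(1)] assms(2,3)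
  unfolding root_path_def is_path_def by auto

lemma root_path_drop:
  assumes "root_path E Rt x p" "j < length p"
  shows "root_path E Rt (p ! j) (drop j p)"
  using assms unfolding root_path_def
  by (auto simp: is_path_drop hd_drop_conv_nth butlast_drop dest: in_set_dropD)

lemma root_path_length:
  assumes "root_path E Rt x p" "x \<notin> Rt" shows "length p \<ge> 2"
proof -
  have "p \<noteq> []" "hd p = x" using root_path_hd[OF assms(1)] by auto
  moreover have "last p \<in> Rt" using assms(1) unfolding root_path_def by blast
  ultimately show ?thesis using assms(2) by (cases p) (auto simp: Suc_le_eq split: if_splits)
qed

lemma root_path_singleton: "y \<in> Rt \<Longrightarrow> root_path E Rt y [y]"
  unfolding root_path_def is_path_def is_walk_def by simp

lemma root_path_Cons:
  assumes "root_path E Rt y p" "{x, y} \<in> E" "x \<notin> set p" "x \<notin> Rt"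
  shows "root_path E Rt x (x # p)"
proof -
  have p: "p \<noteq> []" "hd p = y" using root_path_hd[OF assms(1)] by auto
  have "is_path E p" using assms(1) unfolding root_path_def by blast
  then have "is_path E (x # p)" using assms p unfolding is_path_iff_successively by (cases p) auto
  then show ?thesis using assms p unfolding root_path_def by auto
qed

locale rooted_graph =
  fixes t :: nat and VH :: "'h set" and E :: "'h set set" and col :: "'h set \<Rightarrow> nat"
    and Rt :: "'h set"
  assumes rooted: "rooted t VH E col Rt"
begin

abbreviation rpath :: "'h \<Rightarrow> 'h list" where "rpath \<equiv> the_root_path E Rt"
abbreviation par :: "'h \<Rightarrow> 'h" where "par \<equiv> parent E Rt"

lemma colored: "colored_graph t VH E col"
  using rooted unfolding rooted_def by blast

lemma roots_subset: "Rt \<subseteq> VH"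
  using rooted unfolding rooted_def by blast

lemma acyclic: "\<not> (\<exists>c. set c \<subseteq> VH \<and> is_cycle (fedges E Rt) c)"
  using rooted unfolding rooted_def by blast

lemma unique_root: "v \<in> VH \<Longrightarrow> \<exists>!r. r \<in> Rt \<and> reach (fedges E Rt) v r"
  using rooted unfolding rooted_def by blast

lemma root_path_unique:
  assumes x: "x \<in> VH" and p1: "root_path E Rt x p1" and p2: "root_path E Rt x p2"
  shows "p1 = p2"
proof (rule acyclic_path_unique[OF acyclic root_path_fedges[OF p1] root_path_fedges[OF p2]])
  show "set p1 \<subseteq> VH" "set p2 \<subseteq> VH" using root_path_set_subset[OF colored] p1 p2 x by blast+
  show "hd p1 = hd p2" using root_path_hd p1 p2 by metis
  have "reach (fedges E Rt) x (last p)" if "root_path E Rt x p" for p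
    unfolding reach_def using root_path_fedges[OF that] root_path_hd[OF that] by blast
  moreover have "last p1 \<in> Rt" "last p2 \<in> Rt" using p1 p2 unfolding root_path_def by blast+
  ultimately show "last p1 = last p2" using unique_root[OF x] p1 p2 by blast
qed

lemma root_path_exists:
  assumes "x \<in> VH" obtains p where "root_path E Rt x p"
proof -
  obtain p where p: "is_path (fedges E Rt) p" "hd p = x" "last p \<in> Rt"
    using unique_root[OF assms] unfolding reach_def by blast
  obtain p' where p': "prefix p' p" "is_path (fedges (fedges E Rt) Rt) p'" "hd p' = hd p"
    "last p' \<in> Rt" "\<forall>y\<in>set (butlast p'). y \<notin> Rt"
    by (rule path_prefix_to_first_hit[OF p(1,3)])
  have "fedges (fedges E Rt) Rt \<subseteq> E" unfolding fedges_def by blast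
  then have "root_path E Rt x p'" using p' p(2) is_path_mono unfolding root_path_def by blast
  then show thesis by (rule that)
qed

lemma root_path_rpath: "x \<in> VH \<Longrightarrow> root_path E Rt x (rpath x)"
  unfolding the_root_path_def by (metis root_path_exists root_path_unique theI)

lemma rpath_eqI: "x \<in> VH \<Longrightarrow> root_path E Rt x p \<Longrightarrow> rpath x = p"
  using root_path_rpath root_path_unique by blast

lemma rpath_hd: "x \<in> VH \<Longrightarrow> rpath x \<noteq> [] \<and> hd (rpath x) = x"
  using root_path_hd root_path_rpath by metis

lemma set_rpath_subset: "x \<in> VH \<Longrightarrow> set (rpath x) \<subseteq> VH"
  using root_path_set_subset[OF colored root_path_rpath] .

lemma rpath_drop:
  assumes "x \<in> VH" "j < length (rpath x)" shows "rpath (rpath x ! j) = drop j (rpath x)"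
proof (rule rpath_eqI)
  show "rpath x ! j \<in> VH" using set_rpath_subset[OF assms(1)] assms(2) by auto
qed (rule root_path_drop[OF root_path_rpath[OF assms(1)] assms(2)])

lemma set_rpath_mono:
  assumes "z \<in> VH" "y \<in> set (rpath z)" shows "set (rpath y) \<subseteq> set (rpath z)"
proof -
  obtain j where j: "j < length (rpath z)" "rpath z ! j = y"
    using assms(2) by (auto simp: in_set_conv_nth)
  have "rpath y = drop j (rpath z)" using rpath_drop[OF assms(1) j(1)] j(2) by simp
  then show ?thesis by (simp add: set_drop_subset)
qed

lemma rpath_parent:
  assumes "x \<in> VH" "x \<notin> Rt" shows "rpath x = x # rpath (par x)" "par x \<in> VH"
proof -
  have len: "length (rpath x) \<ge> 2" using root_path_length[OF root_path_rpath] assms .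
  have "rpath (par x) = drop 1 (rpath x)" unfolding parent_def using rpath_drop assms(1) len by simp
  then show "rpath x = x # rpath (par x)" using rpath_hd[OF assms(1)] by (cases "rpath x") auto
  show "par x \<in> VH"
    unfolding parent_def using nth_mem[of 1 "rpath x"] set_rpath_subset[OF assms(1)] len by auto
qed

lemma parent_edge:
  assumes "x \<in> VH" "x \<notin> Rt" shows "{x, par x} \<in> E"
proof -
  have "successively (adj E) (rpath x)"
    using root_path_rpath[OF assms(1)] unfolding root_path_def is_path_iff_successively by blast
  then show ?thesis using rpath_parent(1)[OF assms] rpath_hd[OF rpath_parent(2)[OF assms]]
    by (cases "rpath (par x)") auto
qed

lemma set_rpath: "x \<in> VH \<Longrightarrow> set (rpath x) = insert x (ancestors E Rt x)"
  unfolding ancestors_def using rpath_hd by (metis list.collapse list.simps(15))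

lemma parent_in_rpath:
  assumes "z \<in> VH" "y \<in> set (rpath z)" "y \<notin> Rt" shows "par y \<in> set (rpath z)"
proof -
  have y: "y \<in> VH" using set_rpath_subset assms(1,2) by blast
  have "par y \<in> set (rpath y)"
    using rpath_parent(1)[OF y assms(3)] rpath_hd[OF rpath_parent(2)[OF y assms(3)]]
    by (cases "rpath (par y)") auto
  then show ?thesis using set_rpath_mono assms(1,2) by blast
qed

(* A forest edge from y to a vertex further down the path of y would close a cycle. *)
lemma forest_edge_to_rpath:
  assumes e: "{x, y} \<in> fedges E Rt" and x: "x \<in> set (rpath y)"
  shows "x = par y"
proof -
  have xy: "x \<noteq> y" "y \<in> VH"
    using e colored_graph_edgeD[OF colored] unfolding fedges_def by auto
  obtain j where j: "j < length (rpath y)" "rpath y ! j = x" using x by (auto simp: in_set_conv_nth)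
  have "j \<noteq> 0" using j rpath_hd[OF xy(2)] xy(1) by (metis hd_conv_nth)
  moreover have "\<not> j \<ge> 2"
  proof
    assume j2: "j \<ge> 2"
    define c where "c = take (Suc j) (rpath y)"
    have "is_path (fedges E Rt) c"
      unfolding c_def using is_path_take[OF root_path_fedges[OF root_path_rpath[OF xy(2)]]] by simp
    moreover have "length c \<ge> 3" "last c = x" "hd c = y"
      unfolding c_def using j j2 rpath_hd[OF xy(2)] by (auto simp: take_Suc_conv_app_nth hd_take)
    moreover have "set c \<subseteq> VH"
      unfolding c_def using set_rpath_subset[OF xy(2)] by (meson order.trans set_take_subset)
    ultimately show False using acyclic e unfolding is_cycle_def by auto
  qed
  ultimately show ?thesis using j unfolding parent_def by (metis One_nat_def less_2_cases not_le)
qed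

lemma forest_edge_parent:
  assumes e: "{x, y} \<in> fedges E Rt" and y: "y \<notin> Rt"
  shows "(x \<notin> Rt \<and> y = par x) \<or> x = par y"
proof -
  have eE: "{x, y} \<in> E" using e unfolding fedges_def by auto
  have xy: "x \<noteq> y" "x \<in> VH" "y \<in> VH" using colored_graph_edgeD[OF colored eE] by auto
  have eE': "{y, x} \<in> E" using eE by (simp add: insert_commute)
  consider "x \<in> Rt" | "x \<notin> Rt" "x \<notin> set (rpath y)" | "x \<in> set (rpath y)" by blast
  then show ?thesis
  proof cases
    case 1
    then have "root_path E Rt y [y, x]" using root_path_Cons[OF root_path_singleton[OF 1] eE'] xy y by simp
    then have "rpath y = [y, x]" using rpath_eqI xy(3) by blast
    then show ?thesis unfolding parent_def by simp
  next
    case 2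
    then have "root_path E Rt x (x # rpath y)" using root_path_Cons[OF root_path_rpath eE] xy by simp
    then have "rpath x = x # rpath y" using rpath_eqI xy(2) by blast
    then show ?thesis using 2 rpath_hd[OF xy(3)] unfolding parent_def by (cases "rpath y") auto
  next
    case 3
    then show ?thesis using forest_edge_to_rpath e by blast
  qed
qed

lemma forest_edge_parent_sym:
  assumes "{x, y} \<in> fedges E Rt"
  shows "(x \<notin> Rt \<and> y = par x) \<or> (y \<notin> Rt \<and> x = par y)"
proof (cases "y \<in> Rt")
  case True
  then have "x \<notin> Rt" using assms unfolding fedges_def by auto
  moreover have "{y, x} \<in> fedges E Rt" using assms by (simp add: insert_commute)
  ultimately show ?thesis using forest_edge_parent[of y x] True by blast
qed (use forest_edge_parent[OF assms] in blast)

end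

locale root_extension = rooted_graph +
  fixes E' and col' and S
  assumes colored': "colored_graph t VH E' col'"
    and edges_subset: "E \<subseteq> E'"
    and new_edges: "e \<in> E' \<Longrightarrow> e \<notin> E \<Longrightarrow> e \<subseteq> S"
    and col'_eq: "e \<in> E \<Longrightarrow> col' e = col e"
    and roots_subset_S: "Rt \<subseteq> S" and S_subset: "S \<subseteq> VH"
    and parent_closed: "y \<in> S \<Longrightarrow> y \<notin> Rt \<Longrightarrow> par y \<in> S"
begin

lemma fedges_subset: "fedges E' S \<subseteq> fedges E Rt"
  using new_edges roots_subset_S unfolding fedges_def by blast

lemma path_to_new_roots_prefix:
  "is_path (fedges E' S) p \<Longrightarrow> hd p \<in> VH \<Longrightarrow> last p \<in> S \<Longrightarrow>
    prefix p (rpath (hd p)) \<and> (\<forall>y\<in>set (butlast p). y \<notin> S)"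
proof (induction p)
  case Nil then show ?case by (simp add: is_path_iff_successively)
next
  case (Cons v p')
  note IH = Cons.IH and prems = Cons.prems
  have vV: "v \<in> VH" using prems by simp
  show ?case
  proof (cases p')
    case Nil then show ?thesis using rpath_hd[OF vV] by (cases "rpath v") auto
  next
    case (Cons w p'')
    note p' = this
    have eF': "{v, w} \<in> fedges E' S" and path': "is_path (fedges E' S) p'" and "v \<notin> set p'"
      using prems(1) p' unfolding is_path_iff_successively by auto
    have eF: "{v, w} \<in> fedges E Rt" using eF' fedges_subset by blast
    have not_in_S: "\<not> {v, w} \<subseteq> S" using eF' unfolding fedges_def by blast
    have wV: "w \<in> VH" using colored_graph_edgeD[OF colored, of v w] eF unfolding fedges_def by blast
    have IH': "prefix p' (rpath w)" "\<forall>y\<in>set (butlast p'). y \<notin> S"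
      using IH[OF path'] p' prems(3) wV by auto
    (* Were v the parent of w, then p' would follow the old path of w and revisit v. *)
    from forest_edge_parent_sym[OF eF] show ?thesis
    proof
      assume a: "v \<notin> Rt \<and> w = par v"
      then have "v \<notin> S" using parent_closed not_in_S by auto
      then show ?thesis using rpath_parent(1)[OF vV] a IH' p' by simp
    next
      assume a: "w \<notin> Rt \<and> v = par w"
      then have "w \<notin> S" using parent_closed not_in_S by auto
      then have "p'' \<noteq> []" using prems(3) p' by auto
      moreover have "prefix p'' (rpath v)" using IH'(1) rpath_parent(1)[OF wV] a p' by simp
      ultimately have "hd p'' = v" using rpath_hd[OF vV] by (metis hd_append2 prefixE)
      then show ?thesis using \<open>p'' \<noteq> []\<close> \<open>v \<notin> set p'\<close> hd_in_set p' by auto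
    qed
  qed
qed

lemma unique_root_reach:
  assumes v: "v \<in> VH" shows "\<exists>!x. x \<in> S \<and> reach (fedges E' S) v x"
proof -
  have path: "is_path E' (rpath v)" and last: "last (rpath v) \<in> S"
    using root_path_rpath[OF v] is_path_mono edges_subset roots_subset_S
    unfolding root_path_def by blast+
  obtain p where "prefix p (rpath v)" "is_path (fedges E' S) p" "hd p = hd (rpath v)" "last p \<in> S"
    "\<forall>y\<in>set (butlast p). y \<notin> S"
    by (rule path_prefix_to_first_hit[OF path last])
  then have p: "is_path (fedges E' S) p" "hd p = v" "last p \<in> S" using rpath_hd[OF v] by auto
  have first_hit: "prefix q (rpath v) \<and> (\<forall>y\<in>set (butlast q). y \<notin> S) \<and> q \<noteq> []"
    if "is_path (fedges E' S) q" "hd q = v" "last q \<in> S" for q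
    using path_to_new_roots_prefix[of q] that v unfolding is_path_iff_successively by auto
  have "x = last p" if x: "x \<in> S" "reach (fedges E' S) v x" for x
  proof -
    obtain q where q: "is_path (fedges E' S) q" "hd q = v" "last q = x"
      using x unfolding reach_def by blast
    have "q = p" using first_hit[OF p] first_hit[OF q(1,2)] q(3) x(1) p(3)
      by (intro prefix_first_hit_unique[of q "rpath v" p S]) auto
    then show ?thesis using q(3) by simp
  qed
  moreover have "reach (fedges E' S) v (last p)" using p unfolding reach_def by blast
  ultimately show ?thesis using p(3) by blast
qed

lemma rooted_extension: "rooted t VH E' col' S"
  using acyclic is_cycle_mono[OF _ fedges_subset] colored' S_subset unique_root_reach
  unfolding rooted_def by blast

lemma parent_extension:
  assumes x: "x \<in> VH" "x \<notin> S"
  shows "parent E' S x = par x"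
proof -
  interpret new: rooted_graph t VH E' col' S by (rule rooted_graph.intro[OF rooted_extension])
  define p where "p = new.rpath x"
  have p: "root_path E' S x p" unfolding p_def using new.root_path_rpath[OF x(1)] .
  have "last p \<in> S" using p unfolding root_path_def by blast
  then have "prefix p (rpath x)"
    using path_to_new_roots_prefix[OF root_path_fedges[OF p]] root_path_hd[OF p] x(1) by blast
  then obtain zs where "rpath x = p @ zs" by (rule prefixE)
  moreover have "length p \<ge> 2" using root_path_length[OF p x(2)] .
  ultimately have "p ! 1 = rpath x ! 1" by (simp add: nth_append)
  then show ?thesis unfolding parent_def p_def .
qed

lemma Pset_extension_subset: "Pset VH E' col' S \<phi> \<subseteq> Pset VH E col Rt \<phi>"
proof
  fix z assume "z \<in> Pset VH E' col' S \<phi>"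
  then obtain x where x: "z = (\<phi> x, pcol E' col' S x)" "x \<in> VH" "x \<notin> S" unfolding Pset_def by blast
  have "x \<notin> Rt" using x(3) roots_subset_S by blast
  then have "pcol E' col' S x = pcol E col Rt x"
    using parent_extension[OF x(2,3)] col'_eq parent_edge x(2) unfolding pcol_def by simp
  then show "z \<in> Pset VH E col Rt \<phi>" using x \<open>x \<notin> Rt\<close> unfolding Pset_def by blast
qed

end

lemma Rval_mono:
  assumes "finite X" "finite E'" "E \<subseteq> E'" "\<forall>e\<in>E. col' e = col e"
    and "Pset VH E' col' S \<phi> \<subseteq> Pset VH E col Rt \<phi>"
  shows "Rval V G D VH E col Rt \<phi> X \<le> Rval V G D VH E' col' S \<phi> X"
proof -
  have "cdeg E col i x \<le> cdeg E' col' i x" for i x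
    unfolding cdeg_def by (rule card_mono) (use assms(2-4) in auto)
  then have "pdeg VH E col \<phi> i v \<le> pdeg VH E' col' \<phi> i v" for i v
    unfolding pdeg_def by simp
  then have "(\<Sum>(v,i)\<in>X. int D - int (pdeg VH E' col' \<phi> i v))
      \<le> (\<Sum>(v,i)\<in>X. int D - int (pdeg VH E col \<phi> i v))"
    by (intro sum_mono) auto
  moreover have "card (Pset VH E' col' S \<phi> \<inter> X) \<le> card (Pset VH E col Rt \<phi> \<inter> X)"
    by (rule card_mono) (use assms(1,5) in auto)
  ultimately show ?thesis unfolding Rval_def by linarith
qed

lemma (in root_extension) good_extension:
  assumes "good s D V G t VH E col Rt \<phi>" "embedding V G VH E' col' \<phi>" "finite V"
  shows "good s D V G t VH E' col' S \<phi>"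
  unfolding good_def
proof (intro conjI allI impI rooted_extension assms(2))
  fix X assume X: "X \<subseteq> V \<times> {1..t}" "card X \<le> s"
  have "finite X" using X(1) assms(3) by (meson finite_SigmaI finite_atLeastAtMost finite_subset)
  then have "Rval V G D VH E col Rt \<phi> X \<le> Rval V G D VH E' col' S \<phi> X"
    using colored_graph_finite_edges[OF colored'] edges_subset col'_eq Pset_extension_subset
    by (intro Rval_mono) auto
  moreover have "Rval V G D VH E col Rt \<phi> X \<ge> 0" using assms(1) X unfolding good_def by blast
  ultimately show "0 \<le> Rval V G D VH E' col' S \<phi> X" by linarith
qed

lemma (in rooted_graph) root_extension_insert_edge:
  assumes "h \<in> VH" "h' \<in> VH" "h \<noteq> h'" "{h, h'} \<notin> E" "r \<in> {1..t}"
  shows "root_extension t VH E col Rt (insert {h, h'} E) (col({h, h'} := r))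
           (Rt \<union> set (rpath h) \<union> set (rpath h'))"
proof unfold_locales
  show "colored_graph t VH (insert {h, h'} E) (col({h, h'} := r))"
    using colored_graph_insert_edge[OF colored assms] .
  show "Rt \<union> set (rpath h) \<union> set (rpath h') \<subseteq> VH"
    using roots_subset set_rpath_subset assms(1,2) by blast
  have "h \<in> set (rpath h)" "h' \<in> set (rpath h')" using rpath_hd assms(1,2) hd_in_set by metis+
  then show "e \<subseteq> Rt \<union> set (rpath h) \<union> set (rpath h')" if "e \<in> insert {h, h'} E" "e \<notin> E" for e
    using that by auto
  show "par y \<in> Rt \<union> set (rpath h) \<union> set (rpath h')"
    if "y \<in> Rt \<union> set (rpath h) \<union> set (rpath h')" "y \<notin> Rt" for y
    using that parent_in_rpath assms(1,2) by blast
qed (use rooted assms(4) in auto)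

theorem lemma2p5:
  fixes s D t r :: nat and V :: "'v set" and G :: "nat \<Rightarrow> 'v \<Rightarrow> 'v \<Rightarrow> bool"
    and VH :: "'h set" and E :: "'h set set" and col :: "'h set \<Rightarrow> nat" and Rt :: "'h set"
    and \<phi> :: "'h \<Rightarrow> 'v" and h h' :: 'h
  assumes "graph_family V G t"
    and "good s D V G t VH E col Rt \<phi>"
    and "h \<in> VH" and "h' \<in> VH" and "h \<noteq> h'" and "{h, h'} \<notin> E"
    and "r \<in> {1..t}" and "G r (\<phi> h) (\<phi> h')"
  shows "good s D V G t VH (insert {h, h'} E) (col({h, h'} := r))
           (Rt \<union> {h, h'} \<union> ancestors E Rt h \<union> ancestors E Rt h') \<phi>"
proof -
  have "rooted t VH E col Rt" using assms(2) unfolding good_def by blast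
  then interpret rooted_graph t VH E col Rt by (rule rooted_graph.intro)
  have roots: "Rt \<union> {h, h'} \<union> ancestors E Rt h \<union> ancestors E Rt h'
      = Rt \<union> set (rpath h) \<union> set (rpath h')"
    unfolding set_rpath[OF assms(3)] set_rpath[OF assms(4)] by blast
  have "embedding V G VH E col \<phi>" using assms(2) unfolding good_def by blast
  then have "embedding V G VH (insert {h, h'} E) (col({h, h'} := r)) \<phi>"
    using embedding_insert_edge[OF assms(1) _ assms(6-8)] by blast
  moreover have "finite V" using assms(1) unfolding graph_family_def by blast
  ultimately show ?thesis
    unfolding roots
    by (rule root_extension.good_extension[OF root_extension_insert_edge[OF assms(3-7)] assms(2)])
qed

end
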